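(* Let $P,Q,R\in D$ be non-collinear and let $m\in\mathbb{Z}_{\ge0}$ be the number of triangles inscribed in $S^1$ and circumscribing $\triangle PQR$. Then $$m=\begin{cases}0 & \text{if } \omega(P,Q,R)<1,\\ 1 & \text{if } \omega(P,Q,R)=1,\\ 2 & \text{if } \omega(P,Q,R)>1.\end{cases}$$
   Context: $D=\{(x,y)\in\mathbb{R}^2: x^2+y^2<1\}$ (Beltrami–Klein disk), $S^1$ its boundary circle. Let $D_P$ be the unit disk with Poincaré distance $d(P,Q)=\operatorname{arccosh}\left(1+\frac{2|P-Q|^2}{(1-|P|^2)(1-|Q|^2)}\right)$, and $G^{-1}:D\to D_P$, $G^{-1}(x,y)=\left(\frac{x}{1+\sqrt{1-x^2-y^2}},\frac{y}{1+\sqrt{1-x^2-y^2}}\right)$. For $P,Q\in D$, $d'(P,Q):=d(G^{-1}(P),G^{-1}(Q))$. For $P\ne Q$, $\Delta'(P,Q):=\log\frac{e^{d'(P,Q)}+1}{e^{d'(P,Q)}-1}$. $\delta(P,Q,R)$ is the minimum of $d'(R,S)$ over points $S\in D$ on the straight line through $P$ and $Q$. Define $$\omega(P,Q,R):=\frac{\delta(P,Q,R)+\delta(R,P,Q)+\delta(Q,R,P)}{\Delta'(P,Q)+\Delta'(R,P)+\Delta'(Q,R)}.$$ A triangle inscribed in $S^1$ and circumscribing $\triangle PQR$ is a Euclidean triangle with three distinct vertices on $S^1$ such that $P$, $Q$, $R$ lie on three distinct sides of it (one point on each side). *)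

theory Defs
  imports "HOL-Analysis.Analysis"
begin

definition KleinDisk :: "complex set" where
  "KleinDisk = ball 0 1"

definition circleS1 :: "complex set" where
  "circleS1 = sphere 0 1"

definition poincare_dist :: "complex \<Rightarrow> complex \<Rightarrow> real" where
  "poincare_dist P Q =
     arcosh (1 + 2 * (cmod (P - Q))\<^sup>2 / ((1 - (cmod P)\<^sup>2) * (1 - (cmod Q)\<^sup>2)))"

(* G^{-1} : Klein disk -> Poincare disk *)
definition G_inv :: "complex \<Rightarrow> complex" where
  "G_inv z = z / complex_of_real (1 + sqrt (1 - (cmod z)\<^sup>2))"

definition klein_dist :: "complex \<Rightarrow> complex \<Rightarrow> real" where
  "klein_dist P Q = poincare_dist (G_inv P) (G_inv Q)"

definition Delta' :: "complex \<Rightarrow> complex \<Rightarrow> real" where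
  "Delta' P Q = ln ((exp (klein_dist P Q) + 1) / (exp (klein_dist P Q) - 1))"

definition line_through :: "complex \<Rightarrow> complex \<Rightarrow> complex set" where
  "line_through P Q = {P + complex_of_real t * (Q - P) | t. True}"

definition delta :: "complex \<Rightarrow> complex \<Rightarrow> complex \<Rightarrow> real" where
  "delta P Q R = (INF S \<in> line_through P Q \<inter> KleinDisk. klein_dist R S)"

definition omega :: "complex \<Rightarrow> complex \<Rightarrow> complex \<Rightarrow> real" where
  "omega P Q R = (delta P Q R + delta R P Q + delta Q R P) /
                 (Delta' P Q + Delta' R P + Delta' Q R)"

definition circ_inscribed_triangles :: "complex \<Rightarrow> complex \<Rightarrow> complex \<Rightarrow> complex set set" where
  "circ_inscribed_triangles P Q R =
     {T. \<exists>A B C. T = {A, B, C} \<and> A \<noteq> B \<and> B \<noteq> C \<and> A \<noteq> C \<and>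
          A \<in> circleS1 \<and> B \<in> circleS1 \<and> C \<in> circleS1 \<and>
          P \<in> closed_segment A B \<and> Q \<in> closed_segment B C \<and> R \<in> closed_segment C A}"

end

theory Submission
  imports Defs
begin

(*
  For a point X of the open disk, the Moebius involution A \<mapsto> (X - A) / (1 - cnj X * A) of
  the unit circle sends each endpoint of a chord through X to the other one. Hence the
  circumscribing triangles correspond bijectively to the fixed points on the circle of the
  composite of the involutions for P, Q and R. Clearing denominators, this fixed point equation
  becomes a real linear equation Re (g * A) = k, so there are 0, 1 or 2 triangles according to
  the sign of |g|^2 - k^2, which equals a^2 - p with a twice the signed area of PQR and
  p = (1 - |P|^2) (1 - |Q|^2) (1 - |R|^2).

  On the hyperbolic side, with G = (1 - X.Y)^2 - (1 - |X|^2) (1 - |Y|^2), the formula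
  cosh d'(X,Y) = (1 - X.Y) / sqrt ((1 - |X|^2) (1 - |Y|^2)) gives
  cosh^2 Delta'(X,Y) = coth^2 d'(X,Y) = 1 + (1 - |X|^2) (1 - |Y|^2) / G, and minimizing over the
  line XY gives cosh^2 delta(X,Y,Z) = 1 + a^2 / (G (1 - |Z|^2)). So every term
  delta - Delta' of the numerator minus the denominator of omega has the sign of a^2 - p.
*)

definition chord_partner :: "complex \<Rightarrow> complex \<Rightarrow> complex" where
  "chord_partner P A = (P - A) / (1 - cnj P * A)"

lemma cnj_mult_self_unit: "cmod A = 1 \<Longrightarrow> cnj A * A = 1"
  by (metis complex_norm_square mult.commute of_real_1 power_one)

lemma Re_cnj_mult_less_1:
  assumes "cmod A \<le> 1" "cmod P < 1"
  shows "Re (cnj P * A) < 1"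
proof -
  have "Re (cnj P * A) \<le> cmod P * cmod A"
    using complex_Re_le_cmod[of "cnj P * A"] by (simp add: norm_mult)
  also have "\<dots> < 1"
    using assms by (smt (verit) mult_left_le norm_ge_zero)
  finally show ?thesis .
qed

lemma chord_partner_denom_nonzero:
  assumes "cmod A = 1" "cmod P < 1"
  shows "1 - cnj P * A \<noteq> 0"
proof
  assume "1 - cnj P * A = 0"
  then have "Re (cnj P * A) = Re 1" by simp
  with Re_cnj_mult_less_1[of A P] assms show False by simp
qed

lemma norm_chord_partner:
  assumes "cmod A = 1" "cmod P < 1"
  shows "cmod (chord_partner P A) = 1"
proof -
  have "1 - cnj P * A = cnj (A - P) * A"
    using cnj_mult_self_unit[OF assms(1)] by (simp add: algebra_simps)
  then have "cmod (1 - cnj P * A) = cmod (cnj (A - P)) * cmod A"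
    by (simp only: norm_mult)
  also have "\<dots> = cmod (P - A)"
    using assms(1) by (simp only: complex_mod_cnj norm_minus_commute)
  finally show ?thesis
    using assms by (auto simp: chord_partner_def norm_divide)
qed

lemma chord_partner_involution:
  assumes "cmod A = 1" "cmod P < 1"
  shows "chord_partner P (chord_partner P A) = A"
proof -
  have w: "1 - cnj P * A \<noteq> 0" using chord_partner_denom_nonzero[OF assms] .
  have "1 - cnj P * P = of_real (1 - (cmod P)^2)"
    using complex_norm_square[of P] by (simp add: mult.commute)
  moreover have "1 - (cmod P)^2 > 0"
    using assms(2) by (simp add: abs_square_less_1)
  ultimately have p: "1 - cnj P * P \<noteq> 0"
    by (metis of_real_eq_0_iff less_irrefl)
  have "P - chord_partner P A = A * (1 - cnj P * P) / (1 - cnj P * A)"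
    and "1 - cnj P * chord_partner P A = (1 - cnj P * P) / (1 - cnj P * A)"
    using w by (simp_all add: chord_partner_def field_simps)
  then show ?thesis
    using w p by (simp add: chord_partner_def)
qed

lemma chord_partner_neq:
  assumes "cmod A = 1" "cmod P < 1"
  shows "chord_partner P A \<noteq> A"
proof
  assume "chord_partner P A = A"
  then have "P - A = A * (1 - cnj P * A)"
    using chord_partner_denom_nonzero[OF assms] by (simp add: chord_partner_def field_simps)
  then have "cnj P * A + cnj (cnj P * A) = 2"
    using cnj_mult_self_unit[OF assms(1)] by simp algebra
  then have "complex_of_real (2 * Re (cnj P * A)) = of_real 2"
    by (simp only: complex_add_cnj of_real_numeral)
  then have "Re (cnj P * A) = 1"
    by (simp only: of_real_eq_iff)
  then show False using Re_cnj_mult_less_1[of A P] assms by simp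
qed

lemma chord_partner_if_in_segment:
  assumes "cmod A = 1" "cmod B = 1" "cmod P < 1" "P \<in> closed_segment A B"
  shows "B = chord_partner P A"
proof -
  obtain u where "P = (1 - u) *\<^sub>R A + u *\<^sub>R B"
    using assms(4) by (auto simp: in_segment)
  then have P: "P = (1 - of_real u) * A + of_real u * B"
    by (simp add: scaleR_conv_of_real)
  then have "cnj P = (1 - of_real u) * cnj A + of_real u * cnj B"
    by simp
  then have "B * (1 - cnj P * A) = P - A"
    using cnj_mult_self_unit[OF assms(1)] cnj_mult_self_unit[OF assms(2)] unfolding P by algebra
  then show ?thesis
    using chord_partner_denom_nonzero[OF assms(1,3)] by (simp add: chord_partner_def field_simps)
qed

lemma in_segment_chord_partner:
  assumes "cmod A = 1" "cmod P < 1"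
  shows "P \<in> closed_segment A (chord_partner P A)"
proof -
  define B where "B = chord_partner P A"
  define w where "w = 1 - cnj P * A"
  have w0: "w \<noteq> 0"
    using chord_partner_denom_nonzero[OF assms] by (simp add: w_def)
  have Re_w: "Re w > 0"
    using Re_cnj_mult_less_1[of A P] assms by (simp add: w_def)
  have PA: "P - A = - cnj w * A"
    using cnj_mult_self_unit[OF assms(1)] by (simp add: w_def algebra_simps)
  have "B * w = P - A"
    using w0 by (simp add: B_def w_def chord_partner_def)
  then have BA: "(B - A) * w = - of_real (2 * Re w) * A"
    unfolding complex_add_cnj[symmetric] by (simp add: PA algebra_simps)
  define u where "u = (cmod w)^2 / (2 * Re w)"
  have "(cmod (1 - w))^2 \<le> 1"
    using assms by (simp add: w_def norm_mult power_le_one)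
  then have "(cmod w)^2 \<le> 2 * Re w"
    unfolding cmod_power2 by (simp add: power2_eq_square algebra_simps)
  then have u: "0 \<le> u" "u \<le> 1"
    using Re_w by (simp_all add: u_def)
  have "(P - A) * w = of_real u * ((B - A) * w)"
    using Re_w complex_norm_square[of w] unfolding BA PA u_def by (simp add: field_simps)
  then have "P - A = of_real u * (B - A)"
    using w0 by (simp add: mult.assoc[symmetric])
  then have "P = (1 - of_real u) * A + of_real u * B"
    by (simp add: algebra_simps)
  then show ?thesis
    using u by (auto simp: in_segment scaleR_conv_of_real B_def)
qed

lemma in_segment_iff_chord_partner:
  assumes "cmod A = 1" "cmod B = 1" "cmod P < 1"
  shows "P \<in> closed_segment A B \<longleftrightarrow> B = chord_partner P A"
  using chord_partner_if_in_segment[OF assms] in_segment_chord_partner[OF assms(1,3)] by blast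

lemma chord_partner_cancel:
  assumes "cmod A = 1" "cmod B = 1" "cmod P < 1" "chord_partner P A = chord_partner P B"
  shows "A = B"
proof -
  have "chord_partner P (chord_partner P A) = chord_partner P (chord_partner P B)"
    using assms(4) by simp
  then show ?thesis
    using chord_partner_involution assms(1-3) by simp
qed

definition chord_cycle_fixpoints :: "complex \<Rightarrow> complex \<Rightarrow> complex \<Rightarrow> complex set" where
  "chord_cycle_fixpoints P Q R =
     {A. cmod A = 1 \<and> chord_partner R (chord_partner Q (chord_partner P A)) = A}"

definition chord_triangle :: "complex \<Rightarrow> complex \<Rightarrow> complex \<Rightarrow> complex set" where
  "chord_triangle P Q A = {A, chord_partner P A, chord_partner Q (chord_partner P A)}"

lemma chord_cycle_vertices:
  assumes "A \<in> chord_cycle_fixpoints P Q R" "cmod P < 1" "cmod Q < 1" "cmod R < 1"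
    and B_def: "B = chord_partner P A" and C_def: "C = chord_partner Q B"
  shows "cmod A = 1" "cmod B = 1" "cmod C = 1" "A = chord_partner R C"
    and "A \<noteq> B" "B \<noteq> C" "C \<noteq> A"
proof -
  show A: "cmod A = 1" and A_eq: "A = chord_partner R C"
    using assms(1) by (simp_all add: chord_cycle_fixpoints_def B_def C_def)
  show B: "cmod B = 1"
    using A assms(2) by (simp add: B_def norm_chord_partner)
  show C: "cmod C = 1"
    using B assms(3) by (simp add: C_def norm_chord_partner)
  show "A \<noteq> B"
    using chord_partner_neq[OF A assms(2)] B_def by simp
  show "B \<noteq> C"
    using chord_partner_neq[OF B assms(3)] C_def by simp
  show "C \<noteq> A"
    using chord_partner_neq[OF C assms(4)] A_eq by simp
qed

lemma circ_inscribed_triangles_eq_image: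
  assumes "cmod P < 1" "cmod Q < 1" "cmod R < 1"
  shows "circ_inscribed_triangles P Q R = chord_triangle P Q ` chord_cycle_fixpoints P Q R"
proof (intro equalityI subsetI)
  fix T assume "T \<in> circ_inscribed_triangles P Q R"
  then obtain A B C where T: "T = {A, B, C}"
    and "A \<in> circleS1" "B \<in> circleS1" "C \<in> circleS1"
    and segments: "P \<in> closed_segment A B" "Q \<in> closed_segment B C" "R \<in> closed_segment C A"
    unfolding circ_inscribed_triangles_def by blast
  then have on_circle: "cmod A = 1" "cmod B = 1" "cmod C = 1"
    by (simp_all add: circleS1_def)
  with segments have "chord_partner P A = B" "chord_partner Q B = C" "chord_partner R C = A"
    using in_segment_iff_chord_partner[OF on_circle(1,2) assms(1)]
      in_segment_iff_chord_partner[OF on_circle(2,3) assms(2)]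
      in_segment_iff_chord_partner[OF on_circle(3,1) assms(3)] by simp_all
  then have "A \<in> chord_cycle_fixpoints P Q R" and "T = chord_triangle P Q A"
    using on_circle(1) by (simp_all add: chord_cycle_fixpoints_def chord_triangle_def T)
  then show "T \<in> chord_triangle P Q ` chord_cycle_fixpoints P Q R"
    by blast
next
  fix T assume "T \<in> chord_triangle P Q ` chord_cycle_fixpoints P Q R"
  then obtain A where A: "A \<in> chord_cycle_fixpoints P Q R" and T: "T = chord_triangle P Q A"
    by blast
  define B where "B = chord_partner P A"
  define C where "C = chord_partner Q B"
  note vertices = chord_cycle_vertices[OF A assms B_def C_def]
  have "P \<in> closed_segment A B"
    using in_segment_iff_chord_partner[OF vertices(1,2) assms(1)] B_def by simp
  moreover have "Q \<in> closed_segment B C"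
    using in_segment_iff_chord_partner[OF vertices(2,3) assms(2)] C_def by simp
  moreover have "R \<in> closed_segment C A"
    using in_segment_iff_chord_partner[OF vertices(3,1) assms(3)] vertices(4) by simp
  moreover have "T = {A, B, C}"
    by (simp add: T chord_triangle_def B_def C_def)
  moreover have "A \<in> circleS1" "B \<in> circleS1" "C \<in> circleS1"
    using vertices(1-3) by (simp_all add: circleS1_def)
  ultimately show "T \<in> circ_inscribed_triangles P Q R"
    using vertices(5-7) unfolding circ_inscribed_triangles_def by blast
qed

lemma chord_triangle_eq_imp_not_second_vertex:
  assumes "cmod P < 1" "cmod Q < 1" "cmod R < 1"
    and A1: "A1 \<in> chord_cycle_fixpoints P Q R" and A2: "A2 \<in> chord_cycle_fixpoints P Q R"
    and same: "chord_triangle P Q A1 = chord_triangle P Q A2"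
  shows "A2 \<noteq> chord_partner P A1"
proof
  define B1 where "B1 = chord_partner P A1"
  define C1 where "C1 = chord_partner Q B1"
  define B2 where "B2 = chord_partner P A2"
  define C2 where "C2 = chord_partner Q B2"
  note v1 = chord_cycle_vertices[OF A1 assms(1-3) B1_def C1_def]
  note v2 = chord_cycle_vertices[OF A2 assms(1-3) B2_def C2_def]
  assume "A2 = chord_partner P A1"
  then have "B2 = A1"
    using chord_partner_involution[OF v1(1) assms(1)] by (simp add: B2_def)
  moreover have "C2 \<in> {A1, B1, C1}"
    using same by (simp add: chord_triangle_def B1_def C1_def B2_def C2_def)
  ultimately have "C2 = C1"
    using v2(6,7) \<open>A2 = chord_partner P A1\<close> by (auto simp: B1_def)
  then have "chord_partner Q A1 = chord_partner Q B1"
    using \<open>B2 = A1\<close> by (simp add: C1_def C2_def)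
  then show False
    using chord_partner_cancel[OF v1(1,2) assms(2)] v1(5) by blast
qed

lemma chord_triangle_eq_imp_not_third_vertex:
  assumes "cmod P < 1" "cmod Q < 1" "cmod R < 1"
    and A1: "A1 \<in> chord_cycle_fixpoints P Q R" and A2: "A2 \<in> chord_cycle_fixpoints P Q R"
    and same: "chord_triangle P Q A1 = chord_triangle P Q A2"
  shows "A2 \<noteq> chord_partner Q (chord_partner P A1)"
proof
  define B1 where "B1 = chord_partner P A1"
  define C1 where "C1 = chord_partner Q B1"
  define B2 where "B2 = chord_partner P A2"
  define C2 where "C2 = chord_partner Q B2"
  note v1 = chord_cycle_vertices[OF A1 assms(1-3) B1_def C1_def]
  note v2 = chord_cycle_vertices[OF A2 assms(1-3) B2_def C2_def]
  assume "A2 = chord_partner Q (chord_partner P A1)"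
  then have "A2 = C1"
    by (simp add: B1_def C1_def)
  have "C2 = chord_partner R A2"
    using chord_partner_involution[OF v2(3) assms(3)] v2(4) by simp
  then have "C2 = A1"
    using \<open>A2 = C1\<close> v1(4) by simp
  moreover have "B2 \<in> {A1, B1, C1}"
    using same by (simp add: chord_triangle_def B1_def C1_def B2_def C2_def)
  ultimately have "B2 = B1"
    using v2(5,6) \<open>A2 = C1\<close> by auto
  then have "chord_partner P C1 = chord_partner P A1"
    using \<open>A2 = C1\<close> by (simp add: B1_def B2_def)
  then show False
    using chord_partner_cancel[OF v1(3,1) assms(1)] v1(7) by blast
qed

lemma inj_on_chord_triangle:
  assumes "cmod P < 1" "cmod Q < 1" "cmod R < 1"
  shows "inj_on (chord_triangle P Q) (chord_cycle_fixpoints P Q R)"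
proof
  fix A1 A2
  assume A1: "A1 \<in> chord_cycle_fixpoints P Q R" and A2: "A2 \<in> chord_cycle_fixpoints P Q R"
    and same: "chord_triangle P Q A1 = chord_triangle P Q A2"
  have "A2 \<in> chord_triangle P Q A1"
    using same by (simp add: chord_triangle_def)
  then show "A1 = A2"
    using chord_triangle_eq_imp_not_second_vertex[OF assms A1 A2 same]
      chord_triangle_eq_imp_not_third_vertex[OF assms A1 A2 same]
    by (auto simp: chord_triangle_def)
qed

definition chord_cycle_coeff :: "complex \<Rightarrow> complex \<Rightarrow> complex \<Rightarrow> complex" where
  "chord_cycle_coeff P Q R = cnj (P - Q + R - R * cnj Q * P)"

definition chord_cycle_const :: "complex \<Rightarrow> complex \<Rightarrow> complex \<Rightarrow> real" where
  "chord_cycle_const P Q R = 1 - Re (Q * cnj P) + Re (R * cnj P) - Re (R * cnj Q)"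

lemma of_real_chord_cycle_const:
  "2 * complex_of_real (chord_cycle_const P Q R) =
     2 - (Q * cnj P + cnj Q * P) + (R * cnj P + cnj R * P) - (R * cnj Q + cnj R * Q)"
proof -
  have Re_eq: "complex_of_real (Re z) = (z + cnj z) / 2" for z
    by (simp add: complex_add_cnj)
  show ?thesis
    unfolding chord_cycle_const_def of_real_diff of_real_add of_real_1 Re_eq
    by (simp add: field_simps)
qed

lemma unit_quadratic_eq_Re:
  assumes "cmod A = 1"
  shows "g * A^2 - 2 * complex_of_real k * A + cnj g = 2 * A * complex_of_real (Re (g * A) - k)"
proof -
  have "2 * complex_of_real (Re (g * A)) = g * A + cnj g * cnj A"
    using complex_add_cnj[of "g * A"] by simp
  then show ?thesis
    using cnj_mult_self_unit[OF assms] by (simp add: algebra_simps power2_eq_square)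
qed

lemma chord_cycle_fixed_iff:
  assumes "cmod A = 1" "cmod P < 1" "cmod Q < 1" "cmod R < 1"
  shows "chord_partner R (chord_partner Q (chord_partner P A)) = A \<longleftrightarrow>
    Re (chord_cycle_coeff P Q R * A) = chord_cycle_const P Q R"
proof -
  define B where "B = chord_partner P A"
  define g where "g = chord_cycle_coeff P Q R"
  define k where "k = chord_cycle_const P Q R"
  define w where "w = 1 - cnj P * A"
  have B: "cmod B = 1"
    using assms by (simp add: B_def norm_chord_partner)
  have w: "w \<noteq> 0" and Bw: "B * w = P - A"
    using chord_partner_denom_nonzero[OF assms(1,2)] by (simp_all add: w_def B_def chord_partner_def)
  have "chord_partner R (chord_partner Q B) = A \<longleftrightarrow> chord_partner Q B = chord_partner R A"
    using chord_partner_involution norm_chord_partner assms B by metis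
  also have "\<dots> \<longleftrightarrow> (Q - B) * (1 - cnj R * A) = (R - A) * (1 - cnj Q * B)"
    using chord_partner_denom_nonzero assms B by (simp add: chord_partner_def frac_eq_eq)
  also have "\<dots> \<longleftrightarrow> (Q - B) * w * (1 - cnj R * A) = (R - A) * ((1 - cnj Q * B) * w)"
    using w by (simp add: ac_simps)
  also have "\<dots> \<longleftrightarrow> (Q * w - (P - A)) * (1 - cnj R * A) = (R - A) * (w - cnj Q * (P - A))"
    unfolding Bw[symmetric] by (simp add: algebra_simps)
  also have "\<dots> \<longleftrightarrow> g * A^2 - 2 * complex_of_real k * A + cnj g = 0"
  proof -
    have "(Q * w - (P - A)) * (1 - cnj R * A) - (R - A) * (w - cnj Q * (P - A)) =
        - (g * A^2 - 2 * complex_of_real k * A + cnj g)"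
      unfolding k_def mult.assoc[symmetric] of_real_chord_cycle_const g_def chord_cycle_coeff_def w_def
      by (simp add: algebra_simps power2_eq_square)
    then show ?thesis
      by (metis eq_iff_diff_eq_0 neg_equal_0_iff_equal)
  qed
  also have "\<dots> \<longleftrightarrow> Re (g * A) = k"
    using assms(1) unfolding unit_quadratic_eq_Re[OF assms(1)] mult_eq_0_iff of_real_eq_0_iff
    by auto
  finally show ?thesis
    by (simp add: B_def g_def k_def)
qed

lemma circle_inter_vertical_line:
  fixes r k :: real
  assumes "r \<ge> 0"
  shows "{w. cmod w = r \<and> Re w = k} =
    (if r^2 < k^2 then {} else {Complex k (sqrt (r^2 - k^2)), Complex k (- sqrt (r^2 - k^2))})"
proof -
  have "cmod w = r \<and> Re w = k \<longleftrightarrow> Re w = k \<and> (Im w)^2 = r^2 - k^2" for w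
  proof -
    have "cmod w = r \<longleftrightarrow> (cmod w)^2 = r^2"
      using assms by (simp add: power2_eq_iff_nonneg)
    also have "\<dots> \<longleftrightarrow> (Re w)^2 + (Im w)^2 = r^2"
      by (simp add: cmod_power2)
    finally show ?thesis
      by auto
  qed
  moreover have "y^2 = d \<longleftrightarrow> 0 \<le> d \<and> (y = sqrt d \<or> y = - sqrt d)" for y d :: real
    by (auto simp: real_sqrt_abs abs_if)
  ultimately show ?thesis
    by (auto simp: complex_eq_iff)
qed

lemma card_circle_inter_vertical_line:
  fixes r k :: real
  assumes "r \<ge> 0"
  shows "finite {w. cmod w = r \<and> Re w = k} \<and>
    card {w. cmod w = r \<and> Re w = k} = (if r^2 < k^2 then 0 else if r^2 = k^2 then 1 else 2)"
  by (simp add: circle_inter_vertical_line[OF assms] complex_eq_iff)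

lemma card_unit_circle_inter_line:
  fixes g :: complex and k :: real
  assumes "g \<noteq> 0 \<or> k \<noteq> 0"
  shows "finite {A. cmod A = 1 \<and> Re (g * A) = k} \<and>
    card {A. cmod A = 1 \<and> Re (g * A) = k} =
      (if (cmod g)^2 < k^2 then 0 else if (cmod g)^2 = k^2 then 1 else 2)"
proof (cases "g = 0")
  case True
  then show ?thesis
    using assms by simp
next
  case False
  have "bij_betw ((*) g) {A. cmod A = 1 \<and> Re (g * A) = k} {w. cmod w = cmod g \<and> Re w = k}"
  proof (rule bij_betwI[where g = "\<lambda>w. w / g"])
    have "cmod (w / g) = 1" if "cmod w = cmod g" for w
      using that False by (simp add: norm_divide)
    moreover have "g * (w / g) = w" for w
      using False by simp
    ultimately show "(\<lambda>w. w / g) \<in> {w. cmod w = cmod g \<and> Re w = k} \<rightarrow> {A. cmod A = 1 \<and> Re (g * A) = k}"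
      by (auto simp del: times_complex.sel)
  qed (use False in \<open>auto simp: norm_mult\<close>)
  then show ?thesis
    using card_circle_inter_vertical_line[of "cmod g" k]
    by (simp add: bij_betw_finite bij_betw_same_card)
qed

lemma chord_cycle_const_pos_if_coeff_zero:
  assumes "cmod P < 1" "cmod Q < 1" "chord_cycle_coeff P Q R = 0"
  shows "chord_cycle_const P Q R > 0"
proof -
  define w where "w = 1 - cnj Q * P"
  define k where "k = chord_cycle_const P Q R"
  have "P - Q + R - R * cnj Q * P = 0"
    using assms(3) unfolding chord_cycle_coeff_def complex_cnj_zero_iff .
  then have Rw: "R * w = Q - P"
    by (simp add: w_def algebra_simps)
  then have cRw: "cnj R * cnj w = cnj Q - cnj P"
    by (metis complex_cnj_diff complex_cnj_mult)
  have "2 * complex_of_real k * (w * cnj w) = (w + cnj w) * ((1 - P * cnj P) * (1 - Q * cnj Q))"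
    using Rw cRw unfolding k_def mult.assoc[symmetric] of_real_chord_cycle_const w_def
    by (simp only: complex_cnj_diff complex_cnj_mult complex_cnj_cnj complex_cnj_one) algebra
  then have "complex_of_real (k * (cmod w)^2) = of_real (Re w * ((1 - (cmod P)^2) * (1 - (cmod Q)^2)))"
    unfolding of_real_mult of_real_diff of_real_1 complex_norm_square
    using complex_add_cnj[of w] by simp
  then have k: "k * (cmod w)^2 = Re w * ((1 - (cmod P)^2) * (1 - (cmod Q)^2))"
    by (simp only: of_real_eq_iff)
  have "Re w > 0"
    using Re_cnj_mult_less_1[of P Q] assms(1,2) by (simp add: w_def)
  moreover have "(1 - (cmod P)^2) * (1 - (cmod Q)^2) > 0"
    using assms(1,2) by (simp add: abs_square_less_1)
  ultimately have "k * (cmod w)^2 > 0"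
    unfolding k by simp
  then show ?thesis
    by (simp add: k_def zero_less_mult_iff)
qed

definition double_area :: "complex \<Rightarrow> complex \<Rightarrow> complex \<Rightarrow> real" where
  "double_area P Q R = Im (cnj P * Q) + Im (cnj Q * R) + Im (cnj R * P)"

lemma chord_cycle_discriminant:
  "(cmod (chord_cycle_coeff P Q R))^2 - (chord_cycle_const P Q R)^2 =
     (double_area P Q R)^2 - (1 - (cmod P)^2) * (1 - (cmod Q)^2) * (1 - (cmod R)^2)"
proof -
  obtain p1 p2 q1 q2 r1 r2 where P: "P = Complex p1 p2" and Q: "Q = Complex q1 q2"
    and R: "R = Complex r1 r2"
    by (metis complex.exhaust)
  show ?thesis
    unfolding P Q R chord_cycle_coeff_def chord_cycle_const_def double_area_def cmod_power2
    by (simp add: power2_eq_square algebra_simps)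
qed

lemma card_circ_inscribed_triangles:
  assumes "cmod P < 1" "cmod Q < 1" "cmod R < 1"
  defines "a \<equiv> (double_area P Q R)^2"
    and "p \<equiv> (1 - (cmod P)^2) * (1 - (cmod Q)^2) * (1 - (cmod R)^2)"
  shows "finite (circ_inscribed_triangles P Q R) \<and>
    card (circ_inscribed_triangles P Q R) = (if a < p then 0 else if a = p then 1 else 2)"
proof -
  define g where "g = chord_cycle_coeff P Q R"
  define k where "k = chord_cycle_const P Q R"
  have "chord_cycle_fixpoints P Q R = {A. cmod A = 1 \<and> Re (g * A) = k}"
    using chord_cycle_fixed_iff assms(1-3) by (auto simp: chord_cycle_fixpoints_def g_def k_def)
  moreover have "g \<noteq> 0 \<or> k \<noteq> 0"
    using chord_cycle_const_pos_if_coeff_zero[OF assms(1,2), of R] by (auto simp: g_def k_def)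
  moreover have "(cmod g)^2 - k^2 = a - p"
    unfolding g_def k_def a_def p_def by (rule chord_cycle_discriminant)
  ultimately have "finite (chord_cycle_fixpoints P Q R) \<and>
      card (chord_cycle_fixpoints P Q R) = (if a < p then 0 else if a = p then 1 else 2)"
    using card_unit_circle_inter_line[of g k] by auto
  then show ?thesis
    using circ_inscribed_triangles_eq_image inj_on_chord_triangle assms(1-3)
    by (simp add: card_image)
qed

lemma G_inv_eq_scaleR: "G_inv X = (1 / (1 + sqrt (1 - (cmod X)^2))) *\<^sub>R X"
  by (simp add: G_inv_def scaleR_conv_of_real divide_inverse mult.commute)

lemma norm_G_inv_sq:
  assumes "cmod X < 1"
  defines "s \<equiv> sqrt (1 - (cmod X)^2)"
  shows "(cmod (G_inv X))^2 = (1 - s) / (1 + s)"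
proof -
  have "s \<ge> 0" and "s * s = 1 - (cmod X)^2"
    using assms by (simp_all add: s_def abs_square_le_1 less_imp_le)
  then have "(cmod X)^2 = (1 - s) * (1 + s)"
    by (simp add: algebra_simps)
  then have "(cmod X)^2 / (1 + s)^2 = (1 - s) / (1 + s)"
    using \<open>s \<ge> 0\<close> by (simp add: power2_eq_square)
  then show ?thesis
    by (simp add: G_inv_eq_scaleR s_def power_divide abs_of_nonneg)
qed

lemma norm_diff_G_inv_sq:
  assumes "cmod X < 1" "cmod Y < 1"
  defines "s \<equiv> sqrt (1 - (cmod X)^2)" and "t \<equiv> sqrt (1 - (cmod Y)^2)"
  shows "(cmod (G_inv X - G_inv Y))^2 = 2 * (1 - s * t - X \<bullet> Y) / ((1 + s) * (1 + t))"
proof -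
  have s: "s \<ge> 0" and t: "t \<ge> 0"
    using assms by (simp_all add: s_def t_def abs_square_le_1 less_imp_le)
  have "G_inv X \<bullet> G_inv Y = (X \<bullet> Y) / ((1 + s) * (1 + t))"
    by (simp add: G_inv_eq_scaleR s_def t_def)
  then have "(cmod (G_inv X - G_inv Y))^2 =
      (1 - s) / (1 + s) + (1 - t) / (1 + t) - 2 * (X \<bullet> Y) / ((1 + s) * (1 + t))"
    using norm_G_inv_sq[OF assms(1), folded s_def] norm_G_inv_sq[OF assms(2), folded t_def]
    by (simp add: power2_norm_eq_inner inner_diff inner_commute)
  also have "(1 - s) / (1 + s) + (1 - t) / (1 + t) =
      ((1 - s) * (1 + t) + (1 - t) * (1 + s)) / ((1 + s) * (1 + t))"
    by (rule add_frac_eq) (use s t in auto)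
  also have "(1 - s) * (1 + t) + (1 - t) * (1 + s) = 2 - 2 * s * t"
    by (simp add: algebra_simps)
  also have "(2 - 2 * s * t) / ((1 + s) * (1 + t)) - 2 * (X \<bullet> Y) / ((1 + s) * (1 + t)) =
      2 * (1 - s * t - X \<bullet> Y) / ((1 + s) * (1 + t))"
    by (simp add: diff_divide_distrib[symmetric] algebra_simps)
  finally show ?thesis .
qed

lemma klein_dist_eq_arcosh:
  assumes "cmod X < 1" "cmod Y < 1"
  defines "c \<equiv> (1 - X \<bullet> Y) / (sqrt (1 - (cmod X)^2) * sqrt (1 - (cmod Y)^2))"
  shows "klein_dist X Y = arcosh c" and "c \<ge> 1"
proof -
  define s where "s = sqrt (1 - (cmod X)^2)"
  define t where "t = sqrt (1 - (cmod Y)^2)"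
  have s: "s > 0" and t: "t > 0"
    using assms by (simp_all add: s_def t_def abs_square_less_1)
  define u where "u = G_inv X"
  define w where "w = G_inv Y"
  have "(cmod u)^2 = (1 - s) / (1 + s)" and "(cmod w)^2 = (1 - t) / (1 + t)"
    using norm_G_inv_sq assms by (simp_all add: u_def w_def s_def t_def)
  then have u: "1 - (cmod u)^2 = 2 * s / (1 + s)" and w: "1 - (cmod w)^2 = 2 * t / (1 + t)"
    using s t by (simp_all add: field_simps)
  have uw: "(cmod (u - w))^2 = 2 * (1 - s * t - X \<bullet> Y) / ((1 + s) * (1 + t))"
    using norm_diff_G_inv_sq[OF assms(1,2)] by (simp add: u_def w_def s_def t_def)
  \<comment> \<open>\<open>a\<close>, \<open>b\<close> stand for \<open>1 + s\<close>, \<open>1 + t\<close>, kept abstract so that field_simps only needs \<open>a, b \<noteq> 0\<close>\<close>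
  have frac: "1 + 2 * (2 * (1 - s * t - X \<bullet> Y) / (a * b)) / ((2 * s / a) * (2 * t / b))
      = (1 - X \<bullet> Y) / (s * t)" if "a \<noteq> 0" "b \<noteq> 0" for a b
    using that s t by (simp add: field_simps)
  have c_eq: "1 + 2 * (cmod (u - w))^2 / ((1 - (cmod u)^2) * (1 - (cmod w)^2)) = c"
    unfolding uw u w c_def s_def[symmetric] t_def[symmetric] using s t by (intro frac) simp_all
  then show "klein_dist X Y = arcosh c"
    by (simp add: klein_dist_def poincare_dist_def u_def w_def)
  have "(1 - (cmod u)^2) * (1 - (cmod w)^2) > 0"
    using u w s t by simp
  then have "2 * (cmod (u - w))^2 / ((1 - (cmod u)^2) * (1 - (cmod w)^2)) \<ge> 0"
    by simp
  then show "c \<ge> 1"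
    using c_eq by linarith
qed

lemma cosh_klein_dist:
  assumes "cmod X < 1" "cmod Y < 1"
  shows "cosh (klein_dist X Y) = (1 - X \<bullet> Y) / (sqrt (1 - (cmod X)^2) * sqrt (1 - (cmod Y)^2))"
  using klein_dist_eq_arcosh[OF assms] by simp

lemma klein_dist_nonneg:
  assumes "cmod X < 1" "cmod Y < 1"
  shows "klein_dist X Y \<ge> 0"
  using klein_dist_eq_arcosh[OF assms] by simp

definition klein_gram :: "complex \<Rightarrow> complex \<Rightarrow> real" where
  "klein_gram X Y = (1 - X \<bullet> Y)^2 - (1 - (cmod X)^2) * (1 - (cmod Y)^2)"

lemma klein_gram_ge: "klein_gram X Y \<ge> (1 - (cmod X)^2) * (cmod (Y - X))^2"
proof -
  obtain a b c d where X: "X = Complex a b" and Y: "Y = Complex c d"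
    by (metis complex.exhaust)
  have "klein_gram X Y - (1 - (cmod X)^2) * (cmod (Y - X))^2 = (a * (c - a) + b * (d - b))^2"
    unfolding X Y klein_gram_def inner_complex_def cmod_power2 by simp algebra
  then show ?thesis
    by (smt (verit) zero_le_power2)
qed

lemma klein_gram_pos:
  assumes "cmod X < 1" "X \<noteq> Y"
  shows "klein_gram X Y > 0"
proof -
  have "(1 - (cmod X)^2) * (cmod (Y - X))^2 > 0"
    using assms by (simp add: abs_square_less_1)
  then show ?thesis
    using klein_gram_ge[of X Y] by linarith
qed

lemma cosh_sq_klein_dist:
  assumes "cmod X < 1" "cmod Y < 1"
  shows "(cosh (klein_dist X Y))^2 = (1 - X \<bullet> Y)^2 / ((1 - (cmod X)^2) * (1 - (cmod Y)^2))"
    and "(cosh (klein_dist X Y))^2 = 1 + klein_gram X Y / ((1 - (cmod X)^2) * (1 - (cmod Y)^2))"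
proof -
  define p where "p = (1 - (cmod X)^2) * (1 - (cmod Y)^2)"
  have "1 - (cmod X)^2 > 0" "1 - (cmod Y)^2 > 0"
    using assms by (simp_all add: abs_square_less_1)
  then have "p > 0"
    by (simp add: p_def)
  show *: "(cosh (klein_dist X Y))^2 = (1 - X \<bullet> Y)^2 / ((1 - (cmod X)^2) * (1 - (cmod Y)^2))"
    using \<open>1 - (cmod X)^2 > 0\<close> \<open>1 - (cmod Y)^2 > 0\<close>
    by (simp add: cosh_klein_dist[OF assms] power_divide power_mult_distrib)
  show "(cosh (klein_dist X Y))^2 = 1 + klein_gram X Y / ((1 - (cmod X)^2) * (1 - (cmod Y)^2))"
    unfolding * klein_gram_def p_def[symmetric] using \<open>p > 0\<close> by (simp add: diff_divide_distrib)
qed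

lemma klein_dist_pos:
  assumes "cmod X < 1" "cmod Y < 1" "X \<noteq> Y"
  shows "klein_dist X Y > 0"
proof -
  have "klein_gram X Y / ((1 - (cmod X)^2) * (1 - (cmod Y)^2)) > 0"
    using klein_gram_pos[OF assms(1,3)] assms(1,2) by (simp add: abs_square_less_1)
  then have "cosh (klein_dist X Y) \<noteq> 1"
    using cosh_sq_klein_dist(2)[OF assms(1,2)] by auto
  then show ?thesis
    using klein_dist_nonneg[OF assms(1,2)] by (metis cosh_0 order_le_less)
qed

lemma cosh_ln_coth_half:
  fixes d :: real
  assumes "d > 0"
  shows "cosh (ln ((exp d + 1) / (exp d - 1))) = cosh d / sinh d"
proof -
  define x where "x = exp d"
  have x: "x > 1"
    using assms by (simp add: x_def)
  then have "x * x > 1"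
    using less_1_mult by blast
  then have x2: "x * x - 1 \<noteq> 0" "x * (x * 2) - 2 \<noteq> 0"
    by simp_all
  have "cosh (ln ((x + 1) / (x - 1))) = (x^2 + 1) / (x^2 - 1)"
    using x x2 by (simp add: cosh_ln_real field_simps power2_eq_square)
  moreover have "cosh d / sinh d = (x^2 + 1) / (x^2 - 1)"
    using x x2 by (simp add: cosh_def sinh_def x_def exp_minus field_simps power2_eq_square)
  ultimately show ?thesis
    by (simp add: x_def)
qed

lemma Delta'_pos:
  assumes "cmod X < 1" "cmod Y < 1" "X \<noteq> Y"
  shows "Delta' X Y > 0"
proof -
  have "exp (klein_dist X Y) > 1"
    using klein_dist_pos[OF assms] by simp
  then have "(exp (klein_dist X Y) + 1) / (exp (klein_dist X Y) - 1) > 1"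
    by (simp add: less_divide_eq)
  then show ?thesis
    by (simp add: Delta'_def)
qed

lemma cosh_sq_Delta':
  assumes "cmod X < 1" "cmod Y < 1" "X \<noteq> Y"
  shows "(cosh (Delta' X Y))^2 = 1 + (1 - (cmod X)^2) * (1 - (cmod Y)^2) / klein_gram X Y"
proof -
  define d where "d = klein_dist X Y"
  define p where "p = (1 - (cmod X)^2) * (1 - (cmod Y)^2)"
  define G where "G = klein_gram X Y"
  have sh: "(sinh d)^2 = G / p"
    using cosh_sq_klein_dist(2)[OF assms(1,2)] cosh_square_eq[of d] by (simp add: d_def p_def G_def)
  have "(sinh d)^2 \<noteq> 0"
    using klein_dist_pos[OF assms] by (simp add: d_def)
  have "(cosh (Delta' X Y))^2 = (cosh d)^2 / (sinh d)^2"
    using cosh_ln_coth_half klein_dist_pos[OF assms]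
    by (simp add: Delta'_def d_def power_divide)
  also have "\<dots> = 1 + 1 / (sinh d)^2"
    using \<open>(sinh d)^2 \<noteq> 0\<close> by (simp add: cosh_square_eq add_divide_distrib)
  also have "\<dots> = 1 + p / G"
    unfolding sh by simp
  finally show ?thesis
    by (simp add: p_def G_def)
qed

(* Along the line S = X + t (Y - X) this defect is the square of an affine function of t, whose
   zero is the foot of the perpendicular from Z. *)
lemma klein_line_identity:
  fixes X Y Z :: complex and t :: real
  defines "S \<equiv> X + complex_of_real t * (Y - X)"
  shows "klein_gram X Y * (1 - Z \<bullet> S)^2
      - (klein_gram X Y * (1 - (cmod Z)^2) + (double_area X Y Z)^2) * (1 - (cmod S)^2)
    = ((S - Z) \<bullet> (Y - X) - Im (cnj X * Y) * Im (cnj Z * S))^2"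
proof -
  obtain a b c d e f where X: "X = Complex a b" and Y: "Y = Complex c d" and Z: "Z = Complex e f"
    by (metis complex.exhaust)
  show ?thesis
    unfolding S_def X Y Z klein_gram_def double_area_def inner_complex_def cmod_power2
    by simp algebra
qed

lemma klein_line_slope:
  fixes X Y Z :: complex
  shows "((Y - X) \<bullet> (Y - X) - Im (cnj X * Y) * Im (cnj Z * (Y - X)))^2 =
    klein_gram X Y * (Z \<bullet> (Y - X))^2
      + (klein_gram X Y * (1 - (cmod Z)^2) + (double_area X Y Z)^2) * (cmod (Y - X))^2"
proof -
  obtain a b c d e f where X: "X = Complex a b" and Y: "Y = Complex c d" and Z: "Z = Complex e f"
    by (metis complex.exhaust)
  show ?thesis
    unfolding X Y Z klein_gram_def double_area_def inner_complex_def cmod_power2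
    by simp algebra
qed

lemma cosh_sq_klein_dist_line_ge:
  assumes "cmod X < 1" "cmod Z < 1" "X \<noteq> Y" "S \<in> line_through X Y" "cmod S < 1"
  shows "1 + (double_area X Y Z)^2 / (klein_gram X Y * (1 - (cmod Z)^2)) \<le> (cosh (klein_dist Z S))^2"
proof -
  define G where "G = klein_gram X Y"
  define az where "az = 1 - (cmod Z)^2"
  define as where "as = 1 - (cmod S)^2"
  define K where "K = G * az + (double_area X Y Z)^2"
  have "G > 0" "az > 0" "as > 0"
    using klein_gram_pos assms by (simp_all add: G_def az_def as_def abs_square_less_1)
  obtain t where "S = X + complex_of_real t * (Y - X)"
    using assms(4) by (auto simp: line_through_def)
  then have "G * (1 - Z \<bullet> S)^2 - K * as = ((S - Z) \<bullet> (Y - X) - Im (cnj X * Y) * Im (cnj Z * S))^2"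
    unfolding G_def K_def az_def as_def by (simp add: klein_line_identity)
  then have "(cosh (klein_dist Z S))^2 - K / (G * az) =
      ((S - Z) \<bullet> (Y - X) - Im (cnj X * Y) * Im (cnj Z * S))^2 / (G * az * as)"
    unfolding cosh_sq_klein_dist(1)[OF assms(2,5)] az_def[symmetric] as_def[symmetric]
    using \<open>G > 0\<close> \<open>az > 0\<close> \<open>as > 0\<close> by (simp add: field_simps)
  moreover have "K / (G * az) = 1 + (double_area X Y Z)^2 / (G * az)"
    using \<open>G > 0\<close> \<open>az > 0\<close> by (simp add: K_def add_divide_distrib)
  moreover have "((S - Z) \<bullet> (Y - X) - Im (cnj X * Y) * Im (cnj Z * S))^2 / (G * az * as) \<ge> 0"
    using \<open>G > 0\<close> \<open>az > 0\<close> \<open>as > 0\<close> by simp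
  ultimately have "1 + (double_area X Y Z)^2 / (G * az) \<le> (cosh (klein_dist Z S))^2"
    by linarith
  then show ?thesis
    by (simp add: G_def az_def)
qed

lemma norm_less_1_if_tangent:
  fixes G K :: real
  assumes "G > 0" "K > 0" "cmod Z < 1" "G * (1 - Z \<bullet> S)^2 = K * (1 - (cmod S)^2)"
  shows "cmod S < 1"
proof (rule ccontr)
  assume "\<not> cmod S < 1"
  then have "K * (1 - (cmod S)^2) \<le> 0"
    using assms(2) by (simp add: mult_nonneg_nonpos abs_square_le_1)
  moreover have "G * (1 - Z \<bullet> S)^2 \<ge> 0"
    using assms(1) by simp
  ultimately have "G * (1 - Z \<bullet> S)^2 = 0" and "K * (1 - (cmod S)^2) = 0"
    using assms(4) by linarith+
  then have "Z \<bullet> S = 1" and "cmod S = 1"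
    using assms(1,2) by (simp_all add: abs_square_eq_1)
  moreover have "Z \<bullet> S \<le> cmod Z * cmod S"
    using Cauchy_Schwarz_ineq2[of Z S] by linarith
  ultimately show False
    using assms(3) by simp
qed

lemma klein_line_foot_exists:
  assumes "cmod X < 1" "cmod Z < 1" "X \<noteq> Y"
  defines "K \<equiv> klein_gram X Y * (1 - (cmod Z)^2) + (double_area X Y Z)^2"
  shows "\<exists>S \<in> line_through X Y. cmod S < 1 \<and>
    klein_gram X Y * (1 - Z \<bullet> S)^2 = K * (1 - (cmod S)^2)"
proof -
  define G where "G = klein_gram X Y"
  define F where "F S = (S - Z) \<bullet> (Y - X) - Im (cnj X * Y) * Im (cnj Z * S)" for S
  define S where "S t = X + complex_of_real t * (Y - X)" for t
  define F1 where "F1 = (Y - X) \<bullet> (Y - X) - Im (cnj X * Y) * Im (cnj Z * (Y - X))"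
  have "G > 0" and "K > 0"
    using klein_gram_pos assms by (simp_all add: G_def K_def abs_square_less_1 add_pos_nonneg)
  moreover have "F1^2 = G * (Z \<bullet> (Y - X))^2 + K * (cmod (Y - X))^2"
    unfolding F1_def klein_line_slope by (simp add: G_def K_def)
  ultimately have "F1^2 > 0"
    using assms(3) by (simp add: add_nonneg_pos)
  define t0 where "t0 = - F (S 0) / F1"
  have affine: "F (S t) = F (S 0) + t * F1" for t
    by (simp add: F_def F1_def S_def inner_complex_def algebra_simps)
  have "F (S t0) = 0"
    unfolding affine[of t0] using \<open>F1^2 > 0\<close> by (simp add: t0_def)
  then have foot: "G * (1 - Z \<bullet> S t0)^2 = K * (1 - (cmod (S t0))^2)"
    using klein_line_identity[of X Y Z t0] by (simp add: G_def K_def F_def S_def)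
  moreover have "cmod (S t0) < 1"
    using norm_less_1_if_tangent[OF \<open>G > 0\<close> \<open>K > 0\<close> assms(2) foot] .
  moreover have "S t0 \<in> line_through X Y"
    by (auto simp: line_through_def S_def)
  ultimately show ?thesis
    by (auto simp: G_def)
qed

lemma cosh_sq_klein_dist_foot:
  assumes "cmod X < 1" "cmod Z < 1" "cmod S < 1" "X \<noteq> Y"
    and "klein_gram X Y * (1 - Z \<bullet> S)^2 =
      (klein_gram X Y * (1 - (cmod Z)^2) + (double_area X Y Z)^2) * (1 - (cmod S)^2)"
  shows "(cosh (klein_dist Z S))^2 = 1 + (double_area X Y Z)^2 / (klein_gram X Y * (1 - (cmod Z)^2))"
proof -
  define G where "G = klein_gram X Y"
  define az where "az = 1 - (cmod Z)^2"
  define as where "as = 1 - (cmod S)^2"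
  have "G > 0" "az > 0" "as > 0"
    using klein_gram_pos assms by (simp_all add: G_def az_def as_def abs_square_less_1)
  then show ?thesis
    unfolding cosh_sq_klein_dist(1)[OF assms(2,3)] G_def[symmetric] az_def[symmetric] as_def[symmetric]
    using assms(5)[folded G_def az_def as_def] by (simp add: field_simps)
qed

lemma cosh_sq_le_cosh_sq_iff:
  fixes u v :: real
  assumes "u \<ge> 0" "v \<ge> 0"
  shows "(cosh u)^2 \<le> (cosh v)^2 \<longleftrightarrow> u \<le> v"
proof -
  have "(cosh u)^2 \<le> (cosh v)^2 \<longleftrightarrow> \<bar>cosh u\<bar> \<le> \<bar>cosh v\<bar>"
    by (rule abs_le_square_iff[symmetric])
  also have "\<dots> \<longleftrightarrow> u \<le> v"
    using assms by (simp add: cosh_real_nonneg_le_iff)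
  finally show ?thesis .
qed

lemma sgn_cosh_sq_diff:
  fixes u v :: real
  assumes "u \<ge> 0" "v \<ge> 0"
  shows "sgn ((cosh u)^2 - (cosh v)^2) = sgn (u - v)"
proof -
  consider "u < v" | "u = v" | "v < u"
    by linarith
  then show ?thesis
  proof cases
    case 1
    then have "\<not> (cosh v)^2 \<le> (cosh u)^2"
      by (simp only: cosh_sq_le_cosh_sq_iff[OF assms(2,1)])
    then have "sgn ((cosh u)^2 - (cosh v)^2) = - 1"
      by (intro sgn_neg) linarith
    with 1 show ?thesis
      by simp
  next
    case 3
    then have "\<not> (cosh u)^2 \<le> (cosh v)^2"
      by (simp only: cosh_sq_le_cosh_sq_iff[OF assms])
    then have "sgn ((cosh u)^2 - (cosh v)^2) = 1"
      by (intro sgn_pos) linarith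
    with 3 show ?thesis
      by simp
  qed simp
qed

lemma cosh_sq_delta:
  assumes "cmod X < 1" "cmod Y < 1" "cmod Z < 1" "X \<noteq> Y"
  shows "delta X Y Z \<ge> 0"
    and "(cosh (delta X Y Z))^2 = 1 + (double_area X Y Z)^2 / (klein_gram X Y * (1 - (cmod Z)^2))"
proof -
  define L where "L = line_through X Y \<inter> KleinDisk"
  obtain S0 where "S0 \<in> line_through X Y" "cmod S0 < 1"
    and foot: "klein_gram X Y * (1 - Z \<bullet> S0)^2 =
      (klein_gram X Y * (1 - (cmod Z)^2) + (double_area X Y Z)^2) * (1 - (cmod S0)^2)"
    using klein_line_foot_exists[OF assms(1,3,4)] by blast
  then have "S0 \<in> L"
    by (simp add: L_def KleinDisk_def)
  have nonneg: "klein_dist Z S \<ge> 0" if "S \<in> L" for S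
    using that assms(3) klein_dist_nonneg by (auto simp: L_def KleinDisk_def)
  have S0: "(cosh (klein_dist Z S0))^2 = 1 + (double_area X Y Z)^2 / (klein_gram X Y * (1 - (cmod Z)^2))"
    using cosh_sq_klein_dist_foot[OF assms(1,3) \<open>cmod S0 < 1\<close> assms(4) foot] .
  have "delta X Y Z = klein_dist Z S0"
    unfolding delta_def L_def[symmetric]
  proof (rule cInf_eq_minimum)
    show "klein_dist Z S0 \<in> klein_dist Z ` L"
      using \<open>S0 \<in> L\<close> by blast
    fix d assume "d \<in> klein_dist Z ` L"
    then obtain S where "S \<in> L" "d = klein_dist Z S"
      by blast
    moreover have "(cosh (klein_dist Z S0))^2 \<le> (cosh (klein_dist Z S))^2"
      unfolding S0 using cosh_sq_klein_dist_line_ge assms \<open>S \<in> L\<close> by (simp add: L_def KleinDisk_def)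
    ultimately show "klein_dist Z S0 \<le> d"
      using cosh_sq_le_cosh_sq_iff nonneg \<open>S0 \<in> L\<close> by blast
  qed
  then show "delta X Y Z \<ge> 0" and "(cosh (delta X Y Z))^2 = 1 + (double_area X Y Z)^2 / (klein_gram X Y * (1 - (cmod Z)^2))"
    using nonneg \<open>S0 \<in> L\<close> S0 by simp_all
qed

lemma sgn_delta_minus_Delta':
  assumes "cmod X < 1" "cmod Y < 1" "cmod Z < 1" "X \<noteq> Y"
  shows "sgn (delta X Y Z - Delta' X Y) =
    sgn ((double_area X Y Z)^2 - (1 - (cmod X)^2) * (1 - (cmod Y)^2) * (1 - (cmod Z)^2))"
proof -
  define G where "G = klein_gram X Y"
  define az where "az = 1 - (cmod Z)^2"
  have "G > 0" "az > 0"
    using klein_gram_pos assms by (simp_all add: G_def az_def abs_square_less_1)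
  have "sgn (delta X Y Z - Delta' X Y) = sgn ((cosh (delta X Y Z))^2 - (cosh (Delta' X Y))^2)"
    using sgn_cosh_sq_diff cosh_sq_delta(1) Delta'_pos assms by (metis less_imp_le)
  also have "(cosh (delta X Y Z))^2 - (cosh (Delta' X Y))^2 =
      ((double_area X Y Z)^2 - (1 - (cmod X)^2) * (1 - (cmod Y)^2) * az) / (G * az)"
    unfolding cosh_sq_delta(2)[OF assms] cosh_sq_Delta'[OF assms(1,2,4)]
    using \<open>G > 0\<close> \<open>az > 0\<close> by (simp add: G_def[symmetric] az_def[symmetric] field_simps)
  finally show ?thesis
    using \<open>G > 0\<close> \<open>az > 0\<close> by (simp add: az_def)
qed

lemma sgn_add3:
  fixes x y z :: real
  assumes "sgn x = s" "sgn y = s" "sgn z = s"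
  shows "sgn (x + y + z) = s"
  using assms by (auto simp: sgn_if split: if_splits)

lemma sgn_omega_minus_1:
  assumes "cmod P < 1" "cmod Q < 1" "cmod R < 1" "P \<noteq> Q" "Q \<noteq> R" "R \<noteq> P"
  shows "sgn (omega P Q R - 1) =
    sgn ((double_area P Q R)^2 - (1 - (cmod P)^2) * (1 - (cmod Q)^2) * (1 - (cmod R)^2))"
proof -
  define \<sigma> where "\<sigma> = sgn ((double_area P Q R)^2 - (1 - (cmod P)^2) * (1 - (cmod Q)^2) * (1 - (cmod R)^2))"
  have "double_area R P Q = double_area P Q R" "double_area Q R P = double_area P Q R"
    by (simp_all add: double_area_def)
  then have "sgn (delta P Q R - Delta' P Q) = \<sigma>" "sgn (delta R P Q - Delta' R P) = \<sigma>"
    "sgn (delta Q R P - Delta' Q R) = \<sigma>"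
    using sgn_delta_minus_Delta' assms by (simp_all add: \<sigma>_def mult_ac)
  then have "sgn ((delta P Q R - Delta' P Q) + (delta R P Q - Delta' R P) + (delta Q R P - Delta' Q R))
      = \<sigma>"
    by (rule sgn_add3)
  moreover have "Delta' P Q + Delta' R P + Delta' Q R > 0"
    using Delta'_pos assms by (simp add: add_pos_pos)
  then have "omega P Q R - 1 = ((delta P Q R - Delta' P Q) + (delta R P Q - Delta' R P)
      + (delta Q R P - Delta' Q R)) / (Delta' P Q + Delta' R P + Delta' Q R)"
    by (simp add: omega_def field_simps)
  ultimately show ?thesis
    using \<open>Delta' P Q + Delta' R P + Delta' Q R > 0\<close> by (simp add: \<sigma>_def)
qed

theorem proposition3p2:
  fixes P Q R :: complex
  assumes "P \<in> KleinDisk" "Q \<in> KleinDisk" "R \<in> KleinDisk"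
    and "\<not> collinear {P, Q, R}"
  shows "finite (circ_inscribed_triangles P Q R) \<and>
         card (circ_inscribed_triangles P Q R) =
           (if omega P Q R < 1 then 0 else if omega P Q R = 1 then 1 else 2)"
proof -
  have P: "cmod P < 1" and Q: "cmod Q < 1" and R: "cmod R < 1"
    using assms(1-3) by (auto simp: KleinDisk_def)
  moreover have "P \<noteq> Q" "Q \<noteq> R" "R \<noteq> P"
    using assms(4) by (auto simp: collinear_2 insert_commute)
  ultimately have "sgn (omega P Q R - 1) =
      sgn ((double_area P Q R)^2 - (1 - (cmod P)^2) * (1 - (cmod Q)^2) * (1 - (cmod R)^2))"
    by (rule sgn_omega_minus_1)
  then have "omega P Q R < 1 \<longleftrightarrow>
      (double_area P Q R)^2 < (1 - (cmod P)^2) * (1 - (cmod Q)^2) * (1 - (cmod R)^2)"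
    and "omega P Q R = 1 \<longleftrightarrow>
      (double_area P Q R)^2 = (1 - (cmod P)^2) * (1 - (cmod Q)^2) * (1 - (cmod R)^2)"
    by (auto simp: sgn_if split: if_splits)
  then show ?thesis
    using card_circ_inscribed_triangles[OF P Q R] by simp
qed

end
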